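(* A (closed linear) subspace $X$ of $C([0,\omega_1])$ is separable if and only if there is a countable ordinal $\sigma$ such that $X$ is contained in the range of the projection $\widetilde{P}_\sigma$.
   Context: $\omega_1$ is the first uncountable ordinal; $[0,\omega_1]$ has the order topology and $C([0,\omega_1])$ is the Banach space of continuous scalar-valued functions with sup norm. For a countable ordinal $\sigma$, $\widetilde{P}_\sigma$ is the operator on $C([0,\omega_1])$ given by $\widetilde{P}_\sigma f=f\cdot\mathbf{1}_{[0,\sigma]}+f(\omega_1)\mathbf{1}_{[\sigma+1,\omega_1]}$. *)

theory Defs
  imports "HOL-Analysis.Analysis"
begin

text \<open>The interval [0,omega_1] is modelled by a type 'a of class wellorder with the
order topology (linorder_topology) having a greatest element om such that
every proper initial segment {..<x} (x < om) is countable while {..<om} is not.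
This characterises omega_1 + 1 up to order isomorphism.\<close>

definition omega1_plus_one :: "'a::{wellorder,linorder_topology} \<Rightarrow> bool" where
  "omega1_plus_one om \<longleftrightarrow> (\<forall>x. x \<le> om) \<and> (\<forall>x<om. countable {..<x}) \<and> \<not> countable {..<om}"

definition Ptilde :: "'a::{wellorder,linorder_topology} \<Rightarrow> 'a \<Rightarrow> ('a \<Rightarrow>\<^sub>C 'b::real_normed_field) \<Rightarrow> ('a \<Rightarrow>\<^sub>C 'b)" where
  "Ptilde om \<sigma> f = Bcontfun (\<lambda>x. if x \<le> \<sigma> then apply_bcontfun f x else apply_bcontfun f om)"

definition separable_set :: "'b::metric_space set \<Rightarrow> bool" where
  "separable_set X \<longleftrightarrow> (\<exists>D. countable D \<and> D \<subseteq> X \<and> X \<subseteq> closure D)"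

end

theory Submission
  imports Defs "HOL-Computational_Algebra.Fundamental_Theorem_Algebra"
begin

text \<open>
  A continuous function on \<open>[0, \<omega>\<^sub>1]\<close> is constant on a tail \<open>(s, \<omega>\<^sub>1]\<close> with \<open>s\<close> countable,
  because \<open>\<omega>\<^sub>1\<close> has uncountable cofinality. For a separable \<open>X\<close> the countably many tails of a
  dense subset have a common countable bound \<open>\<sigma>\<close>, and being constant after \<open>\<sigma>\<close> is a closed
  condition; the functions constant after \<open>\<sigma>\<close> are exactly the range of \<open>P\<sigma>\<close>.
  Conversely, a function constant after a countable \<open>\<sigma>\<close> is uniformly approximated by step
  functions that jump only at finitely many points of the countable set \<open>[0, \<sigma>] \<union> {\<omega>\<^sub>1}\<close>
  and take values in a countable dense set of scalars. The scalar field is separable because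
  a real normed field is at most two-dimensional over \<open>\<real>\<close> (Ostrowski): every element is a
  root of a real quadratic, as the minimum of \<open>|\<xi>\<^sup>2 + b\<xi> + c|\<close> over real \<open>b, c\<close> must vanish.
\<close>

section \<open>Real normed fields are separable\<close>

definition rpoly :: "real poly \<Rightarrow> 'a::{real_algebra_1,comm_ring_1} \<Rightarrow> 'a" where
  "rpoly p x = poly (map_poly of_real p) x"

lemma map_poly_of_real_add:
  "map_poly (of_real :: real \<Rightarrow> 'a::{real_algebra_1,comm_ring_1}) (p + q) = map_poly of_real p + map_poly of_real q"
  by (intro poly_eqI) (simp add: coeff_map_poly)

lemma map_poly_of_real_mult:
  "map_poly (of_real :: real \<Rightarrow> 'a::{real_algebra_1,comm_ring_1}) (p * q) = map_poly of_real p * map_poly of_real q"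
  by (induction p rule: pCons_induct) (simp_all add: map_poly_of_real_add map_poly_pCons map_poly_smult)

lemma rpoly_0 [simp]: "rpoly 0 x = 0"
  and rpoly_1 [simp]: "rpoly 1 x = 1"
  and rpoly_pCons [simp]: "rpoly (pCons a p) x = of_real a + x * rpoly p x"
  and rpoly_add [simp]: "rpoly (p + q) x = rpoly p x + rpoly q x"
  and rpoly_mult [simp]: "rpoly (p * q) x = rpoly p x * rpoly q x"
  by (simp_all add: rpoly_def map_poly_pCons map_poly_of_real_add map_poly_of_real_mult)

lemma rpoly_power [simp]: "rpoly (p ^ n) x = rpoly p x ^ n"
  by (induction n) auto

lemma rpoly_diff [simp]: "rpoly (p - q) x = rpoly p x - rpoly q x"
  by (metis add_diff_cancel rpoly_add diff_add_cancel)

lemma rpoly_of_real: "rpoly p (of_real r) = of_real (poly p r)"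
  by (induction p rule: pCons_induct) auto

lemma real_poly_has_complex_root:
  fixes P :: "real poly"
  assumes "degree P > 0"
  obtains w :: complex where "rpoly P w = 0"
proof -
  have "degree (map_poly (of_real :: real \<Rightarrow> complex) P) = degree P"
    by (rule degree_map_poly) simp
  then have "\<not> constant (poly (map_poly (of_real :: real \<Rightarrow> complex) P))"
    using assms by (simp add: constant_degree)
  then show ?thesis using fundamental_theorem_of_algebra that unfolding rpoly_def by blast
qed

lemma real_poly_nonreal_root_quadratic_factor:
  fixes P :: "real poly" and w :: complex
  assumes "rpoly P w = 0" "Im w \<noteq> 0"
  shows "\<exists>b c R. P = [:c, b, 1:] * R"
proof -
  define Q where "Q = [:Re w * Re w + Im w * Im w, -2 * Re w, 1:]"
  have "rpoly Q w = 0"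
    by (simp add: Q_def complex_eq_iff algebra_simps power2_eq_square)
  define r where "r = P mod Q"
  have P_eq: "P = Q * (P div Q) + r" by (simp add: r_def)
  have "rpoly r w = 0"
    using assms(1) \<open>rpoly Q w = 0\<close> P_eq by (metis add_0 rpoly_add rpoly_mult mult_zero_left)
  have "degree r \<le> 1"
    using degree_mod_less[of Q P] by (fastforce simp: Q_def r_def)
  then have r_eq: "r = [:coeff r 0, coeff r 1:]"
    by (intro poly_eqI) (auto simp: coeff_pCons coeff_eq_0 split: nat.splits)
  then have "of_real (coeff r 0) + w * of_real (coeff r 1) = 0"
    using \<open>rpoly r w = 0\<close> by (metis rpoly_pCons rpoly_0 mult_zero_right add_0_right)
  then have "coeff r 1 = 0" "coeff r 0 = 0"
    using assms(2) by (auto simp: complex_eq_iff)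
  then have "r = 0" using r_eq by simp
  then have "P = Q * (P div Q)" using P_eq by simp
  then show ?thesis unfolding Q_def by blast
qed

lemma real_poly_quadratic_factor:
  fixes P :: "real poly"
  assumes "degree P \<ge> 2"
  shows "\<exists>b c R. P = [:c, b, 1:] * R"
proof (cases "\<exists>w::complex. rpoly P w = 0 \<and> Im w \<noteq> 0")
  case True
  then show ?thesis using real_poly_nonreal_root_quadratic_factor by blast
next
  case False
  have linear_factor: "\<exists>a R. Q = [:- a, 1:] * R" if "degree Q > 0" "Q dvd P" for Q
  proof -
    obtain w :: complex where w: "rpoly Q w = 0"
      using real_poly_has_complex_root \<open>degree Q > 0\<close> by blast
    moreover have "rpoly P w = 0"
      using \<open>Q dvd P\<close> w by (auto simp: dvd_def)
    ultimately have "poly Q (Re w) = 0"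
      using False by (metis complex_eq_iff rpoly_of_real complex_of_real_def complex.sel
          zero_complex.sel(1))
    then show ?thesis by (meson dvdE poly_eq_0_iff_dvd)
  qed
  obtain a P1 where P1: "P = [:- a, 1:] * P1"
    using linear_factor[of P] assms by auto
  then have "P1 \<noteq> 0"
    using assms by auto
  then have "degree P = Suc (degree P1)"
    unfolding P1 by (subst degree_mult_eq) auto
  obtain a' P2 where P2: "P1 = [:- a', 1:] * P2"
  proof -
    have "P1 dvd P" unfolding P1 by (rule dvd_triv_right)
    then show ?thesis using linear_factor[of P1] assms \<open>degree P = Suc (degree P1)\<close> that by fastforce
  qed
  have "[:- a, 1:] * [:- a', 1:] = [:a * a', - a - a', 1:]"
    by (simp add: algebra_simps)
  then have "P = [:a * a', - a - a', 1:] * P2"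
    unfolding P1 P2 by (metis mult.assoc)
  then show ?thesis by blast
qed

lemma norm_rpoly_monic_even_degree_ge:
  fixes \<xi> :: "'b::real_normed_field"
  assumes m: "\<And>b c. m \<le> norm (rpoly [:c, b, 1:] \<xi>)" and "m \<ge> 0"
  shows "lead_coeff P = 1 \<Longrightarrow> degree P = 2 * k \<Longrightarrow> m ^ k \<le> norm (rpoly P \<xi>)"
proof (induction k arbitrary: P)
  case 0
  then have "P = 1"
    by (metis degree_0_id mult_zero_right pCons_one)
  then show ?case by simp
next
  case (Suc k)
  then obtain b c R where PR: "P = [:c, b, 1:] * R"
    using real_poly_quadratic_factor[of P] by auto
  have "lead_coeff P = lead_coeff R"
    unfolding PR lead_coeff_mult by simp
  then have "R \<noteq> 0" "lead_coeff R = 1"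
    using Suc.prems by auto
  moreover have "degree P = 2 + degree R"
    unfolding PR using \<open>R \<noteq> 0\<close> by (subst degree_mult_eq) auto
  ultimately have "m ^ k \<le> norm (rpoly R \<xi>)"
    using Suc by simp
  then have "m * m ^ k \<le> norm (rpoly [:c, b, 1:] \<xi>) * norm (rpoly R \<xi>)"
    using m[of c b] \<open>m \<ge> 0\<close> by (intro mult_mono) auto
  then show ?case by (simp only: PR rpoly_mult norm_mult power_Suc)
qed

text \<open>
  For odd \<open>n\<close>, \<open>p\<^sup>n + \<epsilon>\<^sup>n = (p + \<epsilon>) S\<close> with \<open>S\<close> monic of degree \<open>2(n - 1)\<close>, so
  \<open>|S(\<xi>)| \<ge> m^(n - 1)\<close> and \<open>|p(\<xi>) + \<epsilon>| \<le> (m\<^sup>n + \<epsilon>\<^sup>n) / m^(n - 1)\<close>.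
\<close>

lemma norm_rpoly_quadratic_shift_le:
  fixes \<xi> :: "'b::real_normed_field"
  assumes m: "\<And>b c. m \<le> norm (rpoly [:c, b, 1:] \<xi>)"
    and min: "norm (rpoly [:c0, b0, 1:] \<xi>) = m" and "m > 0" "\<epsilon> > 0"
  shows "norm (rpoly [:c0 + \<epsilon>, b0, 1:] \<xi>) \<le> m + m * (\<epsilon> / m) ^ Suc (2 * j)"
proof -
  define n where "n = Suc (2 * j)"
  define p0 :: "real poly" where "p0 = [:c0, b0, 1:]"
  define p1 :: "real poly" where "p1 = [:c0 + \<epsilon>, b0, 1:]"
  define e :: "real poly" where "e = [:- \<epsilon>:]"
  define S where "S = (\<Sum>i<n. e ^ (n - Suc i) * p0 ^ i)"
  have "p0 \<noteq> 0" "degree p0 = 2" "lead_coeff p0 = 1"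
    by (simp_all add: p0_def)
  then have "degree (p0 ^ n) = 2 * n" "lead_coeff (p0 ^ n) = 1"
    by (simp add: degree_power_eq, metis lead_coeff_power power_one)
  moreover have "degree (- (e ^ n)) = 0"
    by (simp add: e_def poly_const_pow)
  ultimately have "degree (p0 ^ n - e ^ n) = 2 * n" "lead_coeff (p0 ^ n - e ^ n) = 1"
    using degree_add_eq_right[of "- (e ^ n)" "p0 ^ n"] lead_coeff_add_le[of "- (e ^ n)" "p0 ^ n"]
    by (simp_all add: n_def)
  moreover have factor: "p0 ^ n - e ^ n = p1 * S"
    unfolding S_def by (simp add: power_diff_sumr2 p0_def p1_def e_def)
  ultimately have deg: "degree (p1 * S) = 2 * n" and lead: "lead_coeff (p1 * S) = 1"
    by simp_all
  have "p1 \<noteq> 0" "S \<noteq> 0"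
    using lead by (auto simp: p1_def)
  then have "degree (p1 * S) = 2 + degree S"
    by (subst degree_mult_eq) (simp_all add: p1_def)
  then have "degree S = 2 * (2 * j)"
    using deg by (simp add: n_def)
  moreover have "lead_coeff S = 1"
    using lead unfolding lead_coeff_mult by (simp add: p1_def)
  ultimately have S_ge: "m ^ (2 * j) \<le> norm (rpoly S \<xi>)"
    using norm_rpoly_monic_even_degree_ge[OF m, of S "2 * j"] \<open>m > 0\<close> by simp
  have "rpoly (p0 ^ n - e ^ n) \<xi> = rpoly p0 \<xi> ^ n - (- of_real \<epsilon>) ^ n"
    by (simp add: e_def)
  then have "norm (rpoly p1 \<xi>) * norm (rpoly S \<xi>) = norm (rpoly p0 \<xi> ^ n - (- of_real \<epsilon>) ^ n)"
    by (metis factor rpoly_mult norm_mult)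
  also have "\<dots> \<le> m ^ n + \<epsilon> ^ n"
    using norm_triangle_ineq4[of "rpoly p0 \<xi> ^ n" "(- of_real \<epsilon>) ^ n"] min \<open>\<epsilon> > 0\<close>
    by (simp add: norm_power p0_def)
  finally have "m ^ (2 * j) * norm (rpoly p1 \<xi>) \<le> m ^ (2 * j) * m + \<epsilon> ^ n"
    using S_ge by (simp add: n_def mult.commute order_trans[OF mult_left_mono])
  then show ?thesis
    using \<open>m > 0\<close> by (simp add: p1_def n_def field_simps)
qed

text \<open>
  A positive minimum \<open>m\<close> would be attained again after shifting \<open>c\<close> by \<open>m/2\<close>, hence after
  arbitrarily large shifts, which is absurd.
\<close>

lemma min_norm_real_quadratic_eq_0:
  fixes \<xi> :: "'b::real_normed_field"
  assumes m: "\<And>b c. m \<le> norm (rpoly [:c, b, 1:] \<xi>)"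
    and min: "norm (rpoly [:c0, b0, 1:] \<xi>) = m"
  shows "m = 0"
proof (rule ccontr)
  assume "m \<noteq> 0"
  then have "m > 0" using min by (metis norm_ge_zero order_le_less)
  define \<epsilon> where "\<epsilon> = m / 2"
  have "\<epsilon> > 0" "\<epsilon> / m < 1" using \<open>m > 0\<close> by (simp_all add: \<epsilon>_def)
  have shift_min: "norm (rpoly [:c + \<epsilon>, b0, 1:] \<xi>) = m"
    if "norm (rpoly [:c, b0, 1:] \<xi>) = m" for c
  proof (rule antisym)
    have "(\<lambda>j. m + m * ((\<epsilon> / m) * ((\<epsilon> / m)\<^sup>2) ^ j)) \<longlonglongrightarrow> m + m * ((\<epsilon> / m) * 0)"
      using \<open>\<epsilon> > 0\<close> \<open>m > 0\<close> \<open>\<epsilon> / m < 1\<close>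
      by (intro tendsto_intros LIMSEQ_power_zero) (simp add: abs_square_less_1)
    moreover have "norm (rpoly [:c + \<epsilon>, b0, 1:] \<xi>) \<le> m + m * ((\<epsilon> / m) * ((\<epsilon> / m)\<^sup>2) ^ j)" for j
      using norm_rpoly_quadratic_shift_le[OF m that \<open>m > 0\<close> \<open>\<epsilon> > 0\<close>, of j]
      by (simp add: power_mult)
    ultimately show "norm (rpoly [:c + \<epsilon>, b0, 1:] \<xi>) \<le> m"
      by (intro LIMSEQ_le_const) auto
  qed (rule m)
  have shifts: "norm (rpoly [:c0 + of_nat k * \<epsilon>, b0, 1:] \<xi>) = m" for k
  proof (induction k)
    case (Suc k)
    then show ?case
      using shift_min[of "c0 + of_nat k * \<epsilon>"] by (simp add: algebra_simps)
  qed (use min in simp)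
  obtain k :: nat where k: "of_nat k * \<epsilon> > 2 * m"
    using reals_Archimedean3[OF \<open>\<epsilon> > 0\<close>] by blast
  have "rpoly [:c0 + of_nat k * \<epsilon>, b0, 1:] \<xi> = rpoly [:c0, b0, 1:] \<xi> + of_real (of_nat k * \<epsilon>)"
    by (simp add: algebra_simps)
  then have "norm (of_real (of_nat k * \<epsilon>) :: 'b) - norm (rpoly [:c0, b0, 1:] \<xi>)
      \<le> norm (rpoly [:c0 + of_nat k * \<epsilon>, b0, 1:] \<xi>)"
    by (metis norm_diff_ineq add.commute)
  then have "of_nat k * \<epsilon> - m \<le> norm (rpoly [:c0 + of_nat k * \<epsilon>, b0, 1:] \<xi>)"
    using min \<open>\<epsilon> > 0\<close> by (simp only: norm_of_real abs_of_pos)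
  then show False
    using shifts[of k] k \<open>m > 0\<close> by simp
qed

lemma closed_range_of_real: "closed (range (of_real :: real \<Rightarrow> 'a::real_normed_algebra_1))"
proof -
  have "complete (of_real ` UNIV :: 'a set)"
    by (rule complete_isometric_image[of 1]) (auto intro: bounded_linear_of_real complete_UNIV)
  then show ?thesis by (rule complete_imp_closed)
qed

lemma norm_real_linear_ge:
  fixes \<xi> :: "'a::real_normed_field"
  shows "\<bar>b\<bar> * infdist \<xi> (range of_real) \<le> norm (of_real b * \<xi> + of_real c)"
proof (cases "b = 0")
  case False
  have "of_real b * \<xi> + of_real c = of_real b * (\<xi> - of_real (- c / b))"
    using False by (simp add: algebra_simps of_real_def)
  moreover have "infdist \<xi> (range of_real) \<le> norm (\<xi> - of_real (- c / b))"
    using infdist_le[OF rangeI[of of_real "- c / b"], of \<xi>] by (metis dist_norm)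
  ultimately show ?thesis
    by (simp add: norm_mult mult_left_mono)
qed simp

lemma norm_real_quadratic_attains_min:
  fixes \<xi> :: "'a::real_normed_field"
  assumes "\<xi> \<notin> range of_real"
  obtains b0 c0 where "\<And>b c. norm (rpoly [:c0, b0, 1:] \<xi>) \<le> norm (rpoly [:c, b, 1:] \<xi>)"
proof -
  define d where "d = infdist \<xi> (range of_real)"
  have "d > 0"
    unfolding d_def using assms closed_range_of_real by (intro infdist_pos_not_in_closed) auto
  define F where "F z = norm (rpoly [:snd z, fst z, 1:] \<xi>)" for z :: "real \<times> real"
  define A where "A = norm (\<xi> * \<xi>)"
  define B where "B = 2 * A / d"
  define K where "K = {z. F z \<le> A}"
  have "continuous_on UNIV F"
    unfolding F_def by (simp add: algebra_simps) (intro continuous_intros)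
  then have "closed K"
    unfolding K_def by (intro closed_Collect_le) auto
  moreover have "K \<subseteq> {- B..B} \<times> {- (2 * A + B * norm \<xi>)..2 * A + B * norm \<xi>}"
  proof
    fix z assume "z \<in> K"
    obtain b c where z: "z = (b, c)" by fastforce
    have "of_real b * \<xi> + of_real c = rpoly [:c, b, 1:] \<xi> - \<xi> * \<xi>"
      by (simp add: algebra_simps)
    then have "norm (of_real b * \<xi> + of_real c) \<le> F z + A"
      unfolding F_def A_def z by (metis norm_triangle_ineq4 fst_conv snd_conv)
    then have lin: "norm (of_real b * \<xi> + of_real c) \<le> 2 * A"
      using \<open>z \<in> K\<close> by (simp add: K_def)
    then have "\<bar>b\<bar> \<le> B"
      using norm_real_linear_ge[of b \<xi> c] \<open>d > 0\<close> by (simp add: B_def d_def field_simps)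
    moreover have "\<bar>c\<bar> \<le> norm (of_real b * \<xi> + of_real c) + \<bar>b\<bar> * norm \<xi>"
      using norm_triangle_ineq4[of "of_real b * \<xi> + of_real c" "of_real b * \<xi>"]
      by (simp add: norm_mult)
    ultimately show "z \<in> {- B..B} \<times> {- (2 * A + B * norm \<xi>)..2 * A + B * norm \<xi>}"
      using lin mult_right_mono[OF \<open>\<bar>b\<bar> \<le> B\<close> norm_ge_zero[of \<xi>]]
      by (auto simp: z abs_le_iff)
  qed
  then have "bounded K"
    by (rule bounded_subset[OF bounded_Times[OF bounded_closed_interval bounded_closed_interval]])
  moreover have "(0, 0) \<in> K" by (simp add: K_def F_def A_def)
  ultimately obtain z0 where "z0 \<in> K" "\<And>z. z \<in> K \<Longrightarrow> F z0 \<le> F z"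
    using continuous_attains_inf[of K F] \<open>continuous_on UNIV F\<close>
    by (metis compact_eq_bounded_closed continuous_on_subset empty_iff subset_UNIV)
  then have "F z0 \<le> F z" for z
    by (cases "z \<in> K") (auto simp: K_def)
  then show ?thesis
    using that[of "snd z0" "fst z0"] by (metis F_def fst_conv snd_conv)
qed

lemma real_quadratic_root_exists:
  fixes \<xi> :: "'a::real_normed_field"
  shows "\<exists>b c. \<xi>\<^sup>2 + of_real b * \<xi> + of_real c = 0"
proof (cases "\<xi> \<in> range of_real")
  case True
  then obtain t where "\<xi> = of_real t" by blast
  then show ?thesis by (intro exI[of _ "- t"] exI[of _ 0]) (simp add: power2_eq_square)
next
  case False
  then obtain b0 c0 where "\<And>b c. norm (rpoly [:c0, b0, 1:] \<xi>) \<le> norm (rpoly [:c, b, 1:] \<xi>)"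
    using norm_real_quadratic_attains_min by metis
  then have "rpoly [:c0, b0, 1:] \<xi> = 0"
    using min_norm_real_quadratic_eq_0 by (metis norm_eq_zero)
  then show ?thesis
    by (intro exI[of _ b0] exI[of _ c0]) (simp add: algebra_simps power2_eq_square)
qed

lemma completed_square_real:
  fixes \<xi> :: "'a::real_normed_field"
  shows "\<exists>b D. (\<xi> + of_real b)\<^sup>2 = of_real D"
proof -
  obtain b c where "\<xi>\<^sup>2 + of_real b * \<xi> + of_real c = 0"
    using real_quadratic_root_exists by blast
  moreover have "(\<xi> + of_real (b / 2))\<^sup>2 = (\<xi>\<^sup>2 + of_real b * \<xi> + of_real c) + of_real (b\<^sup>2 / 4 - c)"
    unfolding power2_eq_square of_real_diff of_real_divide of_real_mult by (simp add: field_simps)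
  ultimately have "(\<xi> + of_real (b / 2))\<^sup>2 = of_real (b\<^sup>2 / 4 - c)"
    by simp
  then show ?thesis by blast
qed

lemma square_eq_of_real_nonneg:
  fixes u :: "'a::real_normed_field"
  assumes "u\<^sup>2 = of_real D" "D \<ge> 0"
  shows "u \<in> range of_real"
proof -
  have "u\<^sup>2 = (of_real (sqrt D))\<^sup>2"
    using assms by (simp flip: of_real_power)
  then have "u = of_real (sqrt D) \<or> u = of_real (- sqrt D)"
    unfolding power2_eq_iff by simp
  then show ?thesis by blast
qed

lemma square_eq_of_real_neg:
  fixes u j :: "'a::real_normed_field"
  assumes "u\<^sup>2 = of_real D" "D < 0" "j\<^sup>2 = -1"
  shows "\<exists>c. u = of_real c * j"
proof -
  have "u\<^sup>2 = (of_real (sqrt (- D)) * j)\<^sup>2"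
    using assms by (simp add: power_mult_distrib flip: of_real_power)
  then have "u = of_real (sqrt (- D)) * j \<or> u = of_real (- sqrt (- D)) * j"
    unfolding power2_eq_iff by simp
  then show ?thesis by blast
qed

lemma real_normed_field_two_dimensional:
  "\<exists>j::'a::real_normed_field. \<forall>\<xi>. \<exists>a c. \<xi> = of_real a + of_real c * j"
proof (cases "range (of_real :: real \<Rightarrow> 'a) = UNIV")
  case True
  have "\<exists>a c. \<xi> = of_real a + of_real c * 0" for \<xi> :: 'a
    using True by (metis UNIV_I add_0_right rangeE mult_zero_right)
  then show ?thesis by blast
next
  case False
  then obtain \<xi>0 :: 'a where \<xi>0: "\<xi>0 \<notin> range of_real" by blast
  obtain b0 D0 where bD0: "(\<xi>0 + of_real b0)\<^sup>2 = of_real D0"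
    using completed_square_real by blast
  have "D0 < 0"
  proof (rule ccontr)
    assume "\<not> D0 < 0"
    then obtain a where "\<xi>0 + of_real b0 = of_real a"
      using square_eq_of_real_nonneg[OF bD0] by force
    then have "\<xi>0 = of_real (a - b0)" by (simp add: algebra_simps)
    then show False using \<xi>0 by blast
  qed
  define j where "j = (\<xi>0 + of_real b0) / of_real (sqrt (- D0))"
  have "j\<^sup>2 = -1"
    using \<open>D0 < 0\<close> by (simp add: j_def power_divide bD0 flip: of_real_power)
  have "\<exists>a c. \<xi> = of_real a + of_real c * j" for \<xi>
  proof -
    obtain b D where bD: "(\<xi> + of_real b)\<^sup>2 = of_real D"
      using completed_square_real by blast
    show ?thesis
    proof (cases "D \<ge> 0")
      case True
      then obtain a where "\<xi> + of_real b = of_real a"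
        using square_eq_of_real_nonneg[OF bD] by blast
      then have "\<xi> = of_real (a - b) + of_real 0 * j" by (simp add: algebra_simps)
      then show ?thesis by blast
    next
      case False
      then obtain c where "\<xi> + of_real b = of_real c * j"
        using square_eq_of_real_neg[OF bD _ \<open>j\<^sup>2 = -1\<close>] by auto
      then have "\<xi> = of_real (- b) + of_real c * j" by (simp add: algebra_simps)
      then show ?thesis by blast
    qed
  qed
  then show ?thesis by blast
qed

lemma separable_set_UNIV_real_normed_field: "separable_set (UNIV :: 'a::real_normed_field set)"
proof -
  obtain j :: 'a where j: "\<And>\<xi>. \<exists>a c. \<xi> = of_real a + of_real c * j"
    using real_normed_field_two_dimensional by blast
  define \<phi> where "\<phi> z = of_real (fst z) + of_real (snd z) * j" for z :: "real \<times> real"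
  have "continuous_on UNIV \<phi>"
    unfolding \<phi>_def by (intro continuous_intros)
  have "UNIV = \<phi> ` closure (\<rat> \<times> \<rat>)"
    using j by (auto simp: closure_Times Rats_closure_real \<phi>_def image_iff)
  also have "\<dots> \<subseteq> closure (\<phi> ` (\<rat> \<times> \<rat>))"
    using \<open>continuous_on UNIV \<phi>\<close>
    by (intro image_closure_subset closure_subset) (auto intro: continuous_on_subset)
  finally show ?thesis
    unfolding separable_set_def by (intro exI[of _ "\<phi> ` (\<rat> \<times> \<rat>)"]) (auto simp: countable_rat)
qed

section \<open>Separability and functions on \<open>[0, \<omega>\<^sub>1]\<close> constant on a tail\<close>

lemma separable_setI:
  fixes X :: "'a::metric_space set"
  assumes "countable D" "X \<subseteq> closure D"
  shows "separable_set X"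
proof -
  define P where "P d n x \<longleftrightarrow> x \<in> X \<and> dist x d < 1 / real (Suc n)" for d n x
  define I where "I = {(d, n). d \<in> D \<and> (\<exists>x. P d n x)}"
  define c where "c = (\<lambda>(d, n). SOME x. P d n x)"
  have c: "P d n (c (d, n))" if "(d, n) \<in> I" for d n
    using that unfolding I_def c_def by (auto intro: someI_ex)
  have "countable I"
    by (rule countable_subset[of _ "D \<times> UNIV"]) (auto simp: I_def \<open>countable D\<close>)
  moreover have "c ` I \<subseteq> X"
    using c by (auto simp: P_def)
  moreover have "X \<subseteq> closure (c ` I)"
  proof
    fix x assume "x \<in> X"
    show "x \<in> closure (c ` I)" unfolding closure_approachable
    proof (intro allI impI)
      fix e :: real assume "e > 0"
      then obtain n where n: "1 / real (Suc n) < e / 2"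
        by (metis half_gt_zero inverse_eq_divide reals_Archimedean)
      have "x \<in> closure D" "1 / real (Suc n) > 0"
        using \<open>x \<in> X\<close> assms(2) by auto
      then obtain d where "d \<in> D" "dist x d < 1 / real (Suc n)"
        unfolding closure_approachable by (metis dist_commute)
      then have "(d, n) \<in> I" using \<open>x \<in> X\<close> by (auto simp: I_def P_def)
      then have "dist (c (d, n)) d < 1 / real (Suc n)"
        using c by (simp add: P_def)
      then have "dist (c (d, n)) x < e"
        using \<open>dist x d < _\<close> n dist_triangle3[of "c (d, n)" x d] by (simp add: dist_commute)
      then show "\<exists>y\<in>c ` I. dist y x < e" using \<open>(d, n) \<in> I\<close> by blast
    qed
  qed
  ultimately show ?thesis unfolding separable_set_def by blast
qed

lemma separable_set_subset:
  fixes X Y :: "'a::metric_space set"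
  assumes "separable_set Y" "X \<subseteq> Y"
  shows "separable_set X"
proof -
  obtain D where "countable D" "Y \<subseteq> closure D"
    using assms(1) by (auto simp: separable_set_def)
  then show ?thesis
    using assms(2) by (meson separable_setI order_trans)
qed

lemma open_atMost_wellorder: "open {..t :: 'a::{wellorder,linorder_topology}}"
proof (cases "\<exists>z. t < z")
  case True
  then have "t < (LEAST z. t < z)" by (rule LeastI_ex)
  then have "{..t} = {..<LEAST z. t < z}"
    by (auto dest: not_less_Least simp: not_less)
  then show ?thesis by simp
next
  case False
  then have "{..t} = UNIV" by (auto simp: not_less)
  then show ?thesis by simp
qed

lemma omega1_plus_one_top: "omega1_plus_one om \<Longrightarrow> x \<le> om"
  by (simp add: omega1_plus_one_def)

lemma omega1_plus_one_countable_atMost: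
  assumes "omega1_plus_one om" "a < om"
  shows "countable {..a}"
proof -
  have "{..a} = insert a {..<a}" by auto
  then show ?thesis using assms by (simp add: omega1_plus_one_def)
qed

lemma omega1_plus_one_countable_bounded:
  assumes om: "omega1_plus_one om" and "countable A" "A \<subseteq> {..<om}"
  shows "\<exists>s<om. \<forall>a\<in>A. a < s"
proof -
  have "countable {..a}" if "a \<in> A" for a
    using omega1_plus_one_countable_atMost[OF om] that \<open>A \<subseteq> {..<om}\<close> by blast
  then have "countable (\<Union>a\<in>A. {..a})"
    using \<open>countable A\<close> by blast
  moreover have "\<not> countable {..<om}"
    using om by (simp add: omega1_plus_one_def)
  ultimately obtain s where "s < om" "s \<notin> (\<Union>a\<in>A. {..a})"
    by (metis countable_subset lessThan_iff subsetI)
  then show ?thesis by (auto simp: not_le)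
qed

lemma continuous_omega1_plus_one_eventually_const:
  fixes f :: "'a::{wellorder,linorder_topology} \<Rightarrow> 'b::metric_space"
  assumes om: "omega1_plus_one om" and f: "continuous_on UNIV f"
  shows "\<exists>s<om. \<forall>x>s. f x = f om"
proof -
  obtain y0 where "y0 < om"
    using omega1_plus_one_countable_bounded[OF om, of "{}"] by auto
  have "\<exists>a<om. \<forall>x>a. dist (f x) (f om) < 1 / real (Suc n)" for n
  proof -
    have "open (f -` ball (f om) (1 / real (Suc n)))"
      using f by (simp add: open_vimage)
    moreover have "om \<in> f -` ball (f om) (1 / real (Suc n))"
      by simp
    ultimately obtain a where "a < om" "{a<..om} \<subseteq> f -` ball (f om) (1 / real (Suc n))"
      using open_left \<open>y0 < om\<close> by blast
    then show ?thesis
      using omega1_plus_one_top[OF om] by (force simp: dist_commute)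
  qed
  then obtain a where a: "\<And>n. a n < om" "\<And>n x. x > a n \<Longrightarrow> dist (f x) (f om) < 1 / real (Suc n)"
    by metis
  obtain s where "s < om" "\<And>n. a n < s"
    using omega1_plus_one_countable_bounded[OF om, of "range a"] a(1) by auto
  have "f x = f om" if "x > s" for x
  proof (rule ccontr)
    assume "f x \<noteq> f om"
    then obtain n where "1 / real (Suc n) < dist (f x) (f om)"
      using reals_Archimedean by (metis inverse_eq_divide zero_less_dist_iff)
    moreover have "a n < x" using \<open>a n < s\<close> \<open>x > s\<close> by order
    ultimately show False using a(2) by fastforce
  qed
  then show ?thesis using \<open>s < om\<close> by blast
qed

definition constant_after ::
    "'a::{order,topological_space} \<Rightarrow> 'a \<Rightarrow> ('a \<Rightarrow>\<^sub>C 'b::metric_space) set" where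
  "constant_after om \<sigma> = {f. \<forall>x>\<sigma>. apply_bcontfun f x = apply_bcontfun f om}"

lemma closed_constant_after: "closed (constant_after om \<sigma>)"
proof -
  have "continuous_on UNIV (\<lambda>f::'a \<Rightarrow>\<^sub>C 'b. f x)" for x
    unfolding continuous_on_iff using dist_fun_lt_imp_dist_val_lt by blast
  then have "closed {f::'a \<Rightarrow>\<^sub>C 'b. f x = f om}" for x
    by (intro closed_Collect_eq) auto
  moreover have "constant_after om \<sigma> = (\<Inter>x\<in>{\<sigma><..}. {f::'a \<Rightarrow>\<^sub>C 'b. f x = f om})"
    by (auto simp: constant_after_def)
  ultimately show ?thesis by (simp add: closed_INT)
qed

lemma range_Ptilde:
  "range (Ptilde om \<sigma>) =
    (constant_after om \<sigma> :: ('a::{wellorder,linorder_topology} \<Rightarrow>\<^sub>C 'b::real_normed_field) set)"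
proof (intro set_eqI iffI)
  fix g assume "g \<in> range (Ptilde om \<sigma>)"
  then obtain f where g: "g = Ptilde om \<sigma> f" by blast
  define h where "h x = (if x \<le> \<sigma> then f x else f om)" for x
  have "continuous_on ({..\<sigma>} \<union> {\<sigma><..}) h"
  proof (rule continuous_on_open_Un)
    show "continuous_on {..\<sigma>} h"
      by (rule continuous_on_eq[OF continuous_on_apply_bcontfun]) (simp add: h_def)
    show "continuous_on {\<sigma><..} h"
      by (rule continuous_on_eq[OF continuous_on_const[of _ "f om"]]) (auto simp: h_def)
  qed (simp_all add: open_atMost_wellorder)
  moreover have "{..\<sigma>} \<union> {\<sigma><..} = UNIV" by auto
  moreover have "norm (h x) \<le> norm f" for x
    by (simp add: h_def norm_bounded)
  ultimately have "h \<in> bcontfun"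
    by (intro bcontfun_normI) auto
  then have "apply_bcontfun g = h"
    unfolding g Ptilde_def h_def[symmetric] by (simp add: Bcontfun_inverse)
  then show "g \<in> constant_after om \<sigma>"
    by (auto simp: h_def constant_after_def)
next
  fix f :: "'a \<Rightarrow>\<^sub>C 'b" assume "f \<in> constant_after om \<sigma>"
  then have "(\<lambda>x. if x \<le> \<sigma> then f x else f om) = apply_bcontfun f"
    by (auto simp: not_le constant_after_def)
  then have "Ptilde om \<sigma> f = f"
    unfolding Ptilde_def by (simp add: apply_bcontfun_inverse)
  then show "f \<in> range (Ptilde om \<sigma>)" by (metis rangeI)
qed

lemma separable_set_subset_constant_after:
  fixes om :: "'a::{wellorder,linorder_topology}" and X :: "('a \<Rightarrow>\<^sub>C 'b::metric_space) set"
  assumes om: "omega1_plus_one om" and "separable_set X"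
  shows "\<exists>\<sigma><om. X \<subseteq> constant_after om \<sigma>"
proof -
  obtain D where D: "countable D" "X \<subseteq> closure D"
    using \<open>separable_set X\<close> by (auto simp: separable_set_def)
  define s where "s f = (SOME s. s < om \<and> (\<forall>x>s. f x = f om))" for f :: "'a \<Rightarrow>\<^sub>C 'b"
  have s: "s f < om \<and> (\<forall>x>s f. f x = f om)" for f
    unfolding s_def
    by (rule someI_ex[OF continuous_omega1_plus_one_eventually_const[OF om continuous_on_apply_bcontfun]])
  have "countable (s ` D)" "s ` D \<subseteq> {..<om}"
    using s \<open>countable D\<close> by auto
  then obtain \<sigma> where "\<sigma> < om" and \<sigma>: "\<forall>a\<in>s ` D. a < \<sigma>"
    by (auto dest: omega1_plus_one_countable_bounded[OF om])
  have "D \<subseteq> constant_after om \<sigma>"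
  proof
    fix f assume "f \<in> D"
    have "f x = f om" if "\<sigma> < x" for x
      using s[of f] \<sigma> \<open>f \<in> D\<close> that by (metis image_eqI order.strict_trans)
    then show "f \<in> constant_after om \<sigma>"
      by (simp add: constant_after_def)
  qed
  then have "closure D \<subseteq> constant_after om \<sigma>"
    by (rule closure_minimal[OF _ closed_constant_after])
  then show ?thesis using \<open>\<sigma> < om\<close> D(2) by blast
qed

section \<open>Approximation by step functions\<close>

definition next_in :: "'a::wellorder set \<Rightarrow> 'a \<Rightarrow> 'a" where
  "next_in F x = (LEAST t. t \<in> F \<and> x \<le> t)"

lemma
  assumes "t \<in> F" "x \<le> t"
  shows next_in_mem: "next_in F x \<in> F"
    and le_next_in: "x \<le> next_in F x"
    and next_in_le: "next_in F x \<le> t"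
proof -
  show "next_in F x \<in> F" "x \<le> next_in F x"
    unfolding next_in_def using LeastI[of "\<lambda>t. t \<in> F \<and> x \<le> t" t] assms by auto
  show "next_in F x \<le> t"
    unfolding next_in_def using assms by (auto intro: Least_le)
qed

lemma next_in_eqI:
  assumes "t \<in> F" "x \<le> t" "\<And>s. s \<in> F \<Longrightarrow> x \<le> s \<Longrightarrow> t \<le> s"
  shows "next_in F x = t"
  using assms next_in_mem[OF assms(1,2)] le_next_in[OF assms(1,2)] next_in_le[OF assms(1,2)]
  by (meson order.antisym)

lemma continuous_step_approx:
  fixes f :: "'a::{wellorder,linorder_topology} \<Rightarrow> 'b::metric_space"
  assumes f: "continuous_on UNIV f" and "e > 0"
  shows "\<exists>F. finite F \<and> F \<subseteq> {..x} \<and> x \<in> F \<and> (\<forall>y\<le>x. dist (f y) (f (next_in F y)) < e)"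
proof (induction x rule: less_induct)
  case (less x)
  show ?case
  proof (cases "\<exists>y. y < x")
    case False
    have "next_in {x} x = x"
      by (rule next_in_eqI) simp_all
    moreover have "y = x" if "y \<le> x" for y
      using False that by (simp add: le_less)
    ultimately have "\<forall>y\<le>x. dist (f y) (f (next_in {x} y)) < e"
      using \<open>e > 0\<close> by (metis dist_self)
    then show ?thesis by (intro exI[of _ "{x}"]) auto
  next
    case True
    then obtain y0 where "y0 < x" ..
    have "open (f -` ball (f x) e)" "x \<in> f -` ball (f x) e"
      using f \<open>e > 0\<close> by (simp_all add: open_vimage)
    then obtain a where "a < x" and a: "{a<..x} \<subseteq> f -` ball (f x) e"
      using open_left[OF _ _ \<open>y0 < x\<close>] by blast
    obtain Fa where Fa: "finite Fa" "Fa \<subseteq> {..a}" "a \<in> Fa"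
      "\<forall>y\<le>a. dist (f y) (f (next_in Fa y)) < e"
      using less.IH[OF \<open>a < x\<close>] by blast
    define F where "F = insert x Fa"
    have "dist (f y) (f (next_in F y)) < e" if "y \<le> x" for y
    proof (cases "y \<le> a")
      case True
      have "next_in F y = next_in Fa y"
      proof (rule next_in_eqI)
        show "next_in Fa y \<in> F" "y \<le> next_in Fa y"
          using next_in_mem[OF Fa(3) True] le_next_in[OF Fa(3) True] by (simp_all add: F_def)
        show "next_in Fa y \<le> s" if "s \<in> F" "y \<le> s" for s
        proof (cases "s = x")
          case True
          then show ?thesis
            using next_in_le[OF Fa(3) \<open>y \<le> a\<close>] \<open>a < x\<close> by simp
        next
          case False
          then show ?thesis
            using next_in_le[of s Fa y] that by (simp add: F_def)
        qed
      qed
      then show ?thesis using Fa(4) True by simp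
    next
      case False
      have "next_in F y = x"
        using False Fa(2) \<open>y \<le> x\<close> by (intro next_in_eqI) (auto simp: F_def)
      moreover have "y \<in> {a<..x}"
        using False \<open>y \<le> x\<close> by simp
      ultimately show ?thesis
        using a by (auto simp: dist_commute)
    qed
    moreover have "finite F" "F \<subseteq> {..x}" "x \<in> F"
      using Fa \<open>a < x\<close> by (auto simp: F_def)
    ultimately show ?thesis by blast
  qed
qed

lemma next_in_locally_constant:
  fixes F :: "'a::{wellorder,linorder_topology} set"
  assumes "finite F" "t \<in> F" "x \<le> t"
  shows "\<exists>N. open N \<and> x \<in> N \<and> (\<forall>y\<in>N. next_in F y = next_in F x)"
proof -
  define N where "N = {..next_in F x} \<inter> (\<Inter>s\<in>{s\<in>F. s < x}. {s<..})"
  have "open N"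
    unfolding N_def using \<open>finite F\<close> by (intro open_Int open_INT open_atMost_wellorder) auto
  moreover have "x \<in> N"
    using le_next_in[OF assms(2,3)] by (auto simp: N_def)
  moreover have "next_in F y = next_in F x" if "y \<in> N" for y
  proof (rule next_in_eqI)
    show "next_in F x \<in> F" "y \<le> next_in F x"
      using next_in_mem[OF assms(2,3)] that by (auto simp: N_def)
    show "next_in F x \<le> s" if "s \<in> F" "y \<le> s" for s
      using \<open>y \<in> N\<close> that next_in_le[of s F x] by (force simp: N_def not_less)
  qed
  ultimately show ?thesis by blast
qed

lemma continuous_on_comp_next_in:
  fixes F :: "'a::{wellorder,linorder_topology} set"
  assumes "finite F" "\<And>x. \<exists>t\<in>F. x \<le> t"
  shows "continuous_on UNIV (\<lambda>x. v (next_in F x))"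
proof -
  have "isCont (\<lambda>x. v (next_in F x)) x" for x
  proof -
    obtain t where "t \<in> F" "x \<le> t"
      using assms(2) by blast
    then obtain N where "open N" "x \<in> N" and N: "\<forall>y\<in>N. next_in F y = next_in F x"
      using next_in_locally_constant[OF \<open>finite F\<close>] by blast
    then have "\<forall>\<^sub>F y in nhds x. v (next_in F y) = v (next_in F x)"
      unfolding eventually_nhds by metis
    then have "\<forall>\<^sub>F y in at x. v (next_in F y) = v (next_in F x)"
      unfolding eventually_nhds_conv_at by blast
    then show ?thesis
      unfolding isCont_def by (rule tendsto_eventually)
  qed
  then show ?thesis by (simp add: continuous_at_imp_continuous_on)
qed

lemma constant_after_step_approx:
  fixes f :: "'a::{wellorder,linorder_topology} \<Rightarrow>\<^sub>C 'b::metric_space"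
  assumes top: "\<And>x. x \<le> om" and f: "f \<in> constant_after om \<sigma>" and "e > 0"
  shows "\<exists>F. finite F \<and> F \<subseteq> insert om {..\<sigma>} \<and> om \<in> F \<and> (\<forall>y. dist (f y) (f (next_in F y)) < e)"
proof -
  obtain F0 where F0: "finite F0" "F0 \<subseteq> {..\<sigma>}" "\<sigma> \<in> F0"
    and approx: "\<forall>y\<le>\<sigma>. dist (f y) (f (next_in F0 y)) < e"
    using continuous_step_approx[OF continuous_on_apply_bcontfun[of UNIV f] \<open>e > 0\<close>] by blast
  define F where "F = insert om F0"
  have "dist (f y) (f (next_in F y)) < e" for y
  proof (cases "y \<le> \<sigma>")
    case True
    have "next_in F y = next_in F0 y"
    proof (rule next_in_eqI)
      show "next_in F0 y \<in> F" "y \<le> next_in F0 y"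
        using next_in_mem[OF F0(3) True] le_next_in[OF F0(3) True] by (simp_all add: F_def)
      show "next_in F0 y \<le> s" if "s \<in> F" "y \<le> s" for s
      proof (cases "s = om")
        case True
        then show ?thesis using top by simp
      next
        case False
        then show ?thesis using next_in_le[of s F0 y] that by (simp add: F_def)
      qed
    qed
    then show ?thesis using approx True by simp
  next
    case False
    have "om \<in> F" by (simp add: F_def)
    then have "\<sigma> < next_in F y"
      using le_next_in[OF _ top] False by (meson not_le order_less_le_trans)
    then have "f (next_in F y) = f y"
      using f False by (simp add: constant_after_def not_le)
    then show ?thesis using \<open>e > 0\<close> by simp
  qed
  moreover have "finite F" "F \<subseteq> insert om {..\<sigma>}" "om \<in> F"
    using F0 by (auto simp: F_def)
  ultimately show ?thesis by blast
qed

lemma separable_set_constant_after: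
  fixes om \<sigma> :: "'a::{wellorder,linorder_topology}"
  assumes top: "\<And>x. x \<le> om" and "countable {..\<sigma>}"
    and "separable_set (UNIV :: 'b::metric_space set)"
  shows "separable_set (constant_after om \<sigma> :: ('a \<Rightarrow>\<^sub>C 'b) set)"
proof -
  obtain Q :: "'b set" where "countable Q" and Q: "\<And>z. z \<in> closure Q"
    using assms(3) by (auto simp: separable_set_def)
  define T where "T = insert om {..\<sigma>}"
  define step where "step = (\<lambda>(F, v). Bcontfun (\<lambda>x. v (next_in F x)) :: 'a \<Rightarrow>\<^sub>C 'b)"
  define D where "D = step ` (SIGMA F:{F. finite F \<and> F \<subseteq> T}. F \<rightarrow>\<^sub>E Q)"
  have "countable D"
    unfolding D_def using \<open>countable Q\<close> \<open>countable {..\<sigma>}\<close>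
    by (intro countable_image countable_SIGMA countable_Collect_finite_subset countable_PiE)
      (auto simp: T_def)
  moreover have "f \<in> closure D" if f: "f \<in> constant_after om \<sigma>" for f
    unfolding closure_approachable
  proof (intro allI impI)
    fix e :: real assume "e > 0"
    then obtain F where F: "finite F" "F \<subseteq> T" "om \<in> F"
      and approx: "\<And>y. dist (f y) (f (next_in F y)) < e / 4"
      using constant_after_step_approx[OF top f, of "e / 4"] by (auto simp: T_def)
    define v where "v = restrict (\<lambda>t. SOME q. q \<in> Q \<and> dist q (f t) < e / 4) F"
    have v: "v t \<in> Q" "dist (v t) (f t) < e / 4" if "t \<in> F" for t
    proof -
      have "\<exists>q. q \<in> Q \<and> dist q (f t) < e / 4"
        using Q[of "f t"] \<open>e > 0\<close> unfolding closure_approachable by (meson divide_pos_pos zero_less_numeral)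
      from someI_ex[OF this] show "v t \<in> Q" "dist (v t) (f t) < e / 4"
        using that by (simp_all add: v_def)
    qed
    define g where "g x = v (next_in F x)" for x
    have next_F: "next_in F x \<in> F" for x
      using next_in_mem[OF F(3) top] .
    have "continuous_on UNIV g"
      unfolding g_def using F(1,3) top by (intro continuous_on_comp_next_in) blast+
    moreover have "range g \<subseteq> v ` F"
      using next_F by (auto simp: g_def)
    then have "bounded (range g)"
      using F(1) by (meson bounded_subset finite_imageI finite_imp_bounded)
    ultimately have "g \<in> bcontfun"
      by (simp add: bcontfun_def)
    have "dist (Bcontfun g) f \<le> e / 2"
    proof (rule dist_bound)
      fix x
      have "dist (g x) (f x) \<le> dist (v (next_in F x)) (f (next_in F x)) + dist (f (next_in F x)) (f x)"
        unfolding g_def by (rule dist_triangle)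
      also have "\<dots> \<le> e / 2"
        using v(2)[OF next_F[of x]] approx[of x] by (simp add: dist_commute)
      finally show "dist (Bcontfun g x) (f x) \<le> e / 2"
        using \<open>g \<in> bcontfun\<close> by (simp add: Bcontfun_inverse)
    qed
    moreover have "v \<in> F \<rightarrow>\<^sub>E Q"
      using v(1) by (simp add: v_def)
    then have "Bcontfun g \<in> D"
      unfolding D_def step_def g_def using F(1,2) by (intro image_eqI[of _ _ "(F, v)"]) auto
    ultimately show "\<exists>g\<in>D. dist g f < e"
      using \<open>e > 0\<close> by (intro bexI[of _ "Bcontfun g"]) auto
  qed
  ultimately show ?thesis
    by (intro separable_setI) auto
qed

theorem lemma4p2:
  fixes om :: "'a::{wellorder,linorder_topology}"
    and X :: "('a \<Rightarrow>\<^sub>C 'b::real_normed_field) set"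
  assumes "omega1_plus_one om"
    and "subspace X" and "closed X"
  shows "separable_set X \<longleftrightarrow> (\<exists>\<sigma><om. X \<subseteq> range (Ptilde om \<sigma>))"
proof
  assume "separable_set X"
  then show "\<exists>\<sigma><om. X \<subseteq> range (Ptilde om \<sigma>)"
    using separable_set_subset_constant_after[OF assms(1)] by (simp add: range_Ptilde)
next
  assume "\<exists>\<sigma><om. X \<subseteq> range (Ptilde om \<sigma>)"
  then obtain \<sigma> where "\<sigma> < om" "X \<subseteq> constant_after om \<sigma>"
    by (auto simp: range_Ptilde)
  moreover have "separable_set (constant_after om \<sigma> :: ('a \<Rightarrow>\<^sub>C 'b) set)"
    using omega1_plus_one_top[OF assms(1)] omega1_plus_one_countable_atMost[OF assms(1) \<open>\<sigma> < om\<close>]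
      separable_set_UNIV_real_normed_field by (rule separable_set_constant_after)
  ultimately show "separable_set X"
    using separable_set_subset by blast
qed

end
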